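(* \[\sum_{\pi\in\mathcal{C}_1}q^{|\pi|}=\sum_{m\ge0}\frac{q^{\binom{m+1}{2}}}{(q;q)_m}\sum_{j\ge0}q^{\binom{j+1}{2}}{m\brack j}.\]
   Context: An overpartition is a partition in which the first occurrence of each part size may be overlined, with parts listed in non-increasing order with respect to $1<\bar1<2<\bar2<\cdots$. A part is of size $t$ if it is $t$ or $\bar t$, and $|\pi|$ is the sum of the sizes of the parts. $\mathcal{C}_1$ is the set of overpartitions $(\pi_1,\dots,\pi_\ell)$, including the empty one, such that: - for each $1\le i<\ell$, the size of $\pi_i$ minus the size of $\pi_{i+1}$ is at least $1$, and at least $2$ if $\pi_i$ is non-overlined; - no part equals the non-overlined part $1$ (the part $\bar1$ is allowed). $(q;q)_n=\prod_{i=1}^n(1-q^i)$. The Gaussian binomial is ${M\brack N}=\frac{(q;q)_M}{(q;q)_N(q;q)_{M-N}}$ for $0\le N\le M$ and $0$ otherwise. *)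

theory Defs
  imports "HOL-Computational_Algebra.Formal_Power_Series"
begin

text \<open>A part of an overpartition is a pair (t, b): its size t and whether it is overlined (b = True).\<close>
type_synonym opart = "nat \<times> bool"

text \<open>Rank of a part in the order 1 < 1bar < 2 < 2bar < ...\<close>
definition part_rank :: "opart \<Rightarrow> nat" where
  "part_rank p = 2 * fst p + (if snd p then 1 else 0)"

definition is_overpartition :: "opart list \<Rightarrow> bool" where
  "is_overpartition \<pi> \<longleftrightarrow>
     (\<forall>p\<in>set \<pi>. fst p \<ge> 1) \<and>
     sorted_wrt (\<lambda>p p'. part_rank p' \<le> part_rank p) \<pi> \<and>
     (\<forall>i<length \<pi>. \<forall>j<length \<pi>. i < j \<and> fst (\<pi>!i) = fst (\<pi>!j) \<longrightarrow> \<not> snd (\<pi>!j))"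

definition op_weight :: "opart list \<Rightarrow> nat" where
  "op_weight \<pi> = (\<Sum>p\<leftarrow>\<pi>. fst p)"

definition C1 :: "opart list set" where
  "C1 = {\<pi>. is_overpartition \<pi> \<and>
            (\<forall>i. i + 1 < length \<pi> \<longrightarrow>
               int (fst (\<pi>!i)) - int (fst (\<pi>!(i+1))) \<ge> (if snd (\<pi>!i) then 1 else 2)) \<and>
            (1, False) \<notin> set \<pi>}"

text \<open>(q;q)_n as a formal power series in q = fps_X.\<close>
definition qpoch :: "nat \<Rightarrow> rat fps" where
  "qpoch n = (\<Prod>i=1..n. 1 - fps_X ^ i)"

definition qbinom :: "nat \<Rightarrow> nat \<Rightarrow> rat fps" where
  "qbinom M N = (if N \<le> M then qpoch M / (qpoch N * qpoch (M - N)) else 0)"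

end

theory Submission
  imports Defs
begin

text \<open>Read from its smallest part, an element of \<open>C\<^sub>1\<close> is a strictly increasing sequence in
  which every part exceeds its predecessor (initially \<open>0\<close>) by at least \<open>2\<close>, or by at least
  \<open>1\<close> if it is overlined. Let \<open>G\<^sub>m(c)\<close> be the generating function of such sequences of length
  \<open>m\<close> whose initial predecessor is \<open>c\<close>. Lowering every part by one gives
  \<open>G\<^sub>m(c+1) = q\<^sup>m G\<^sub>m(c)\<close>, and splitting off the first part gives
  \<open>G\<^sub>m\<^sub>+\<^sub>1(c) = G\<^sub>m\<^sub>+\<^sub>1(c+1) + q\<^sup>c\<^sup>+\<^sup>1 G\<^sub>m(c+1) + q\<^sup>c\<^sup>+\<^sup>2 G\<^sub>m(c+2)\<close>.
  At \<open>c = 0\<close> this becomes \<open>(1 - q\<^sup>m\<^sup>+\<^sup>1) G\<^sub>m\<^sub>+\<^sub>1(0) = q\<^sup>m\<^sup>+\<^sup>1 (1 + q\<^sup>m\<^sup>+\<^sup>1) G\<^sub>m(0)\<close>, whence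
  \<open>G\<^sub>m(0) = q\<^bsup>(m+1 choose 2)\<^esup> (-q;q)\<^sub>m / (q;q)\<^sub>m\<close>. The q-binomial theorem
  \<open>(-q;q)\<^sub>m = \<Sum>\<^sub>j q\<^bsup>(j+1 choose 2)\<^esup> [m, j]\<close> identifies this with the \<open>m\<close>-th summand, which
  therefore counts the elements of \<open>C\<^sub>1\<close> with exactly \<open>m\<close> parts.\<close>

fun gaps_desc :: "opart list \<Rightarrow> bool" where
  "gaps_desc [] = True"
| "gaps_desc [p] = (2 \<le> fst p + of_bool (snd p))"
| "gaps_desc (p # p' # \<pi>) = (fst p' + 2 \<le> fst p + of_bool (snd p) \<and> gaps_desc (p' # \<pi>))"

lemma gaps_desc_sorted: "gaps_desc \<pi> \<Longrightarrow> sorted_wrt (\<lambda>p p'. fst p' < fst p) \<pi>"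
  by (induction \<pi> rule: gaps_desc.induct) (auto simp: of_bool_def split: if_splits)

lemma gaps_desc_set: "gaps_desc \<pi> \<Longrightarrow> p \<in> set \<pi> \<Longrightarrow> 2 \<le> fst p + of_bool (snd p)"
  by (induction \<pi> rule: gaps_desc.induct) auto

lemma gaps_desc_iff_nth:
  "gaps_desc \<pi> \<longleftrightarrow>
     (\<forall>i. i + 1 < length \<pi> \<longrightarrow> fst (\<pi>!(i+1)) + 2 \<le> fst (\<pi>!i) + of_bool (snd (\<pi>!i))) \<and>
     (\<pi> \<noteq> [] \<longrightarrow> 2 \<le> fst (last \<pi>) + of_bool (snd (last \<pi>)))"
proof (induction \<pi> rule: gaps_desc.induct)
  case (3 p p' \<pi>)
  have all_nat: "(\<forall>i. P i) \<longleftrightarrow> P 0 \<and> (\<forall>i. P (Suc i))" for P :: "nat \<Rightarrow> bool"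
    by (metis not0_implies_Suc)
  show ?case
    unfolding gaps_desc.simps 3 by (subst all_nat) auto
qed auto

lemma gaps_desc_imp_overpartition:
  assumes "gaps_desc \<pi>"
  shows "is_overpartition \<pi>"
  unfolding is_overpartition_def
proof (intro conjI ballI allI impI)
  fix p
  assume "p \<in> set \<pi>"
  then show "1 \<le> fst p"
    using gaps_desc_set[OF assms, of p] by (simp add: of_bool_def split: if_splits)
next
  show "sorted_wrt (\<lambda>p p'. part_rank p' \<le> part_rank p) \<pi>"
    by (rule sorted_wrt_mono_rel[OF _ gaps_desc_sorted[OF assms]]) (auto simp: part_rank_def)
next
  fix i j
  assume "i < length \<pi>" "j < length \<pi>" "i < j \<and> fst (\<pi>!i) = fst (\<pi>!j)"
  then have "fst (\<pi>!j) < fst (\<pi>!i)"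
    using sorted_wrt_nth_less[OF gaps_desc_sorted[OF assms]] by blast
  with \<open>i < j \<and> fst (\<pi>!i) = fst (\<pi>!j)\<close> show "\<not> snd (\<pi>!j)"
    by simp
qed

lemma C1_iff_gaps_desc: "\<pi> \<in> C1 \<longleftrightarrow> gaps_desc \<pi>"
proof
  assume C1: "\<pi> \<in> C1"
  have "2 \<le> fst (last \<pi>) + of_bool (snd (last \<pi>))" if "\<pi> \<noteq> []"
  proof -
    have "last \<pi> \<in> set \<pi>"
      using that by simp
    then have "1 \<le> fst (last \<pi>)" "last \<pi> \<noteq> (1, False)"
      using C1 by (auto simp: C1_def is_overpartition_def)
    then show ?thesis
      by (cases "last \<pi>") auto
  qed
  with C1 show "gaps_desc \<pi>"
    unfolding gaps_desc_iff_nth C1_def by (force split: if_splits)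
next
  assume gaps: "gaps_desc \<pi>"
  have "(1, False) \<notin> set \<pi>"
    using gaps_desc_set[OF gaps] by fastforce
  with gaps show "\<pi> \<in> C1"
    unfolding C1_def using gaps_desc_imp_overpartition gaps_desc_iff_nth
    by (force split: if_splits)
qed

fun gaps_asc :: "nat \<Rightarrow> opart list \<Rightarrow> bool" where
  "gaps_asc c [] = True"
| "gaps_asc c (p # \<rho>) = (c + 2 \<le> fst p + of_bool (snd p) \<and> gaps_asc (fst p) \<rho>)"

lemma gaps_asc_snoc:
  "gaps_asc c (\<rho> @ [p]) \<longleftrightarrow>
     gaps_asc c \<rho> \<and> (if \<rho> = [] then c else fst (last \<rho>)) + 2 \<le> fst p + of_bool (snd p)"
  by (induction \<rho> arbitrary: c) auto

lemma gaps_desc_iff_gaps_asc_rev: "gaps_desc \<pi> \<longleftrightarrow> gaps_asc 0 (rev \<pi>)"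
proof (induction \<pi> rule: gaps_desc.induct)
  case (3 p p' \<pi>)
  have "rev (p # p' # \<pi>) = rev (p' # \<pi>) @ [p]" "last (rev (p' # \<pi>)) = p'"
    by simp_all
  with 3 show ?case
    by (simp only: gaps_asc_snoc gaps_desc.simps) auto
qed auto

lemma gaps_asc_gt: "gaps_asc c \<rho> \<Longrightarrow> p \<in> set \<rho> \<Longrightarrow> c < fst p"
proof (induction \<rho> arbitrary: c)
  case (Cons q \<rho>)
  then show ?case
    by (cases "snd q") (auto dest: Cons.IH)
qed simp

lemma gaps_asc_SucD: "gaps_asc (Suc c) \<rho> \<Longrightarrow> gaps_asc c \<rho>"
  by (cases \<rho>) auto

lemma gaps_asc_map_Suc: "gaps_asc (Suc c) (map (apfst Suc) \<rho>) \<longleftrightarrow> gaps_asc c \<rho>"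
  by (induction \<rho> arbitrary: c) auto

lemma op_weight_Cons [simp]: "op_weight (p # \<rho>) = fst p + op_weight \<rho>"
  by (simp add: op_weight_def)

lemma op_weight_rev [simp]: "op_weight (rev \<rho>) = op_weight \<rho>"
  by (simp add: op_weight_def rev_map[symmetric] sum_list_rev)

lemma op_weight_map_apfst_Suc [simp]: "op_weight (map (apfst Suc) \<rho>) = op_weight \<rho> + length \<rho>"
  by (induction \<rho>) auto

lemma part_le_op_weight: "p \<in> set \<rho> \<Longrightarrow> fst p \<le> op_weight \<rho>"
  by (induction \<rho>) auto

lemma length_le_op_weight: "(\<And>p. p \<in> set \<rho> \<Longrightarrow> 0 < fst p) \<Longrightarrow> length \<rho> \<le> op_weight \<rho>"
proof (induction \<rho>)
  case (Cons p \<rho>)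
  then have "0 < fst p" "length \<rho> \<le> op_weight \<rho>"
    by auto
  then show ?case
    by simp
qed simp

lemma finite_length_op_weight: "finite {\<rho> :: opart list. length \<rho> = m \<and> op_weight \<rho> = n}"
proof (rule finite_subset)
  show "{\<rho>. length \<rho> = m \<and> op_weight \<rho> = n} \<subseteq> {\<rho>. set \<rho> \<subseteq> {0..n} \<times> UNIV \<and> length \<rho> = m}"
    by (auto dest: part_le_op_weight)
  show "finite {\<rho> :: opart list. set \<rho> \<subseteq> {0..n} \<times> UNIV \<and> length \<rho> = m}"
    by (rule finite_lists_length_eq) simp
qed

definition weight_gf :: "opart list set \<Rightarrow> rat fps" where
  "weight_gf A = Abs_fps (\<lambda>n. of_nat (card {\<rho> \<in> A. op_weight \<rho> = n}))"

lemma weight_gf_Nil: "weight_gf {[]} = 1"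
proof (rule fps_ext)
  fix n
  have "{\<rho> \<in> {[]}. op_weight \<rho> = n} = (if n = 0 then {[]} else {})"
    by (auto simp: op_weight_def)
  then show "fps_nth (weight_gf {[]}) n = fps_nth 1 n"
    by (simp add: weight_gf_def)
qed

lemma weight_gf_image:
  assumes inj: "inj_on f A" and weight: "\<And>\<rho>. \<rho> \<in> A \<Longrightarrow> op_weight (f \<rho>) = op_weight \<rho> + k"
  shows "weight_gf (f ` A) = fps_X ^ k * weight_gf A"
proof (rule fps_ext)
  fix n
  have fibre: "{\<sigma> \<in> f ` A. op_weight \<sigma> = n} = f ` {\<rho> \<in> A. op_weight \<rho> + k = n}"
    using weight by auto
  have "card {\<rho> \<in> A. op_weight \<rho> + k = n} = (if n < k then 0 else card {\<rho> \<in> A. op_weight \<rho> = n - k})"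
    by (auto intro: arg_cong[where f = card])
  then show "fps_nth (weight_gf (f ` A)) n = fps_nth (fps_X ^ k * weight_gf A) n"
    unfolding fps_X_power_mult_nth weight_gf_def fps_nth_Abs_fps fibre
    using card_image[OF inj_on_subset[OF inj]] by (simp split: if_splits)
qed

lemma weight_gf_Cons: "weight_gf (Cons p ` A) = fps_X ^ fst p * weight_gf A"
  by (rule weight_gf_image) (auto simp: inj_on_def)

lemma weight_gf_rev: "weight_gf (rev ` A) = weight_gf A"
  using weight_gf_image[of rev A 0] by (simp add: inj_on_def)

lemma weight_gf_Un:
  assumes "A \<inter> B = {}" "\<And>n. finite {\<rho> \<in> A. op_weight \<rho> = n}" "\<And>n. finite {\<rho> \<in> B. op_weight \<rho> = n}"
  shows "weight_gf (A \<union> B) = weight_gf A + weight_gf B"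
proof (rule fps_ext)
  fix n
  have "{\<rho> \<in> A \<union> B. op_weight \<rho> = n} = {\<rho> \<in> A. op_weight \<rho> = n} \<union> {\<rho> \<in> B. op_weight \<rho> = n}"
    by blast
  then show "fps_nth (weight_gf (A \<union> B)) n = fps_nth (weight_gf A + weight_gf B) n"
    using assms by (simp add: weight_gf_def card_Un_disjoint disjoint_iff)
qed

lemma finite_weight_fibre_length:
  "(\<And>\<rho>. \<rho> \<in> A \<Longrightarrow> length \<rho> = m) \<Longrightarrow> finite {\<rho> \<in> A. op_weight \<rho> = n}"
  by (rule finite_subset[OF _ finite_length_op_weight[of m n]]) auto

lemma sums_weight_gf_by_length:
  assumes pos: "\<And>\<rho> p. \<rho> \<in> A \<Longrightarrow> p \<in> set \<rho> \<Longrightarrow> 0 < fst p"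
  shows "(\<lambda>m. weight_gf {\<rho> \<in> A. length \<rho> = m}) sums weight_gf A"
  unfolding sums_def
proof (rule tendsto_fpsI)
  fix n
  show "\<forall>\<^sub>F N in sequentially. fps_nth (\<Sum>m<N. weight_gf {\<rho> \<in> A. length \<rho> = m}) n = fps_nth (weight_gf A) n"
  proof (rule eventually_sequentiallyI)
    fix N
    assume "Suc n \<le> N"
    then have fibre: "{\<rho> \<in> A. op_weight \<rho> = n} = (\<Union>m<N. {\<rho> \<in> {\<rho> \<in> A. length \<rho> = m}. op_weight \<rho> = n})"
      using length_le_op_weight pos by fastforce
    have finite_fibre: "finite {\<rho> \<in> A. length \<rho> = m \<and> op_weight \<rho> = n}" for m
      using finite_weight_fibre_length[of "{\<rho> \<in> A. length \<rho> = m}" m n] by simp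
    have "card {\<rho> \<in> A. op_weight \<rho> = n} = (\<Sum>m<N. card {\<rho> \<in> {\<rho> \<in> A. length \<rho> = m}. op_weight \<rho> = n})"
      unfolding fibre by (rule card_UN_disjoint) (auto simp: finite_fibre)
    then show "fps_nth (\<Sum>m<N. weight_gf {\<rho> \<in> A. length \<rho> = m}) n = fps_nth (weight_gf A) n"
      by (simp only: weight_gf_def fps_sum_nth fps_nth_Abs_fps of_nat_sum)
  qed
qed

definition asc_lists :: "nat \<Rightarrow> nat \<Rightarrow> opart list set" where
  "asc_lists m c = {\<rho>. gaps_asc c \<rho> \<and> length \<rho> = m}"

lemma C1_length_eq: "{\<pi> \<in> C1. length \<pi> = m} = rev ` asc_lists m 0"
proof (intro equalityI subsetI)
  fix \<pi>
  assume "\<pi> \<in> {\<pi> \<in> C1. length \<pi> = m}"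
  then have "rev \<pi> \<in> asc_lists m 0"
    by (simp add: C1_iff_gaps_desc gaps_desc_iff_gaps_asc_rev asc_lists_def)
  then show "\<pi> \<in> rev ` asc_lists m 0"
    by (rule rev_image_eqI) simp
next
  fix \<pi>
  assume "\<pi> \<in> rev ` asc_lists m 0"
  then show "\<pi> \<in> {\<pi> \<in> C1. length \<pi> = m}"
    by (auto simp: C1_iff_gaps_desc gaps_desc_iff_gaps_asc_rev asc_lists_def)
qed

lemma asc_lists_0: "asc_lists 0 c = {[]}"
  by (auto simp: asc_lists_def)

lemma asc_lists_lift: "asc_lists m (Suc c) = map (apfst Suc) ` asc_lists m c"
proof (intro equalityI subsetI)
  fix \<rho>
  assume \<rho>: "\<rho> \<in> asc_lists m (Suc c)"
  then have pos: "\<And>p. p \<in> set \<rho> \<Longrightarrow> 0 < fst p"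
    using gaps_asc_gt[of "Suc c" \<rho>] by (fastforce simp: asc_lists_def)
  define \<sigma> where "\<sigma> = map (apfst (\<lambda>t. t - 1)) \<rho>"
  have \<rho>_eq: "\<rho> = map (apfst Suc) \<sigma>"
    unfolding \<sigma>_def map_map by (rule map_idI[symmetric]) (simp add: prod_eq_iff pos)
  with \<rho> have "\<sigma> \<in> asc_lists m c"
    by (simp add: asc_lists_def gaps_asc_map_Suc)
  with \<rho>_eq show "\<rho> \<in> map (apfst Suc) ` asc_lists m c"
    by blast
qed (auto simp: asc_lists_def gaps_asc_map_Suc)

lemma asc_lists_Suc:
  "asc_lists (Suc m) c = asc_lists (Suc m) (Suc c) \<union>
     (Cons (Suc c, True) ` asc_lists m (Suc c) \<union> Cons (c + 2, False) ` asc_lists m (c + 2))"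
proof (intro equalityI subsetI)
  fix \<rho>
  assume "\<rho> \<in> asc_lists (Suc m) c"
  then obtain p \<sigma> where \<rho>: "\<rho> = p # \<sigma>" "length \<sigma> = m"
    and gap: "c + 2 \<le> fst p + of_bool (snd p)" and \<sigma>: "gaps_asc (fst p) \<sigma>"
    by (auto simp: asc_lists_def length_Suc_conv)
  have "c + 3 \<le> fst p + of_bool (snd p) \<or> p = (Suc c, True) \<or> p = (c + 2, False)"
    using gap by (cases p) (auto simp: of_bool_def split: if_splits)
  then show "\<rho> \<in> asc_lists (Suc m) (Suc c) \<union>
     (Cons (Suc c, True) ` asc_lists m (Suc c) \<union> Cons (c + 2, False) ` asc_lists m (c + 2))"
    using \<rho>(2) \<sigma> by (elim disjE) (auto simp: \<rho>(1) asc_lists_def image_iff)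
qed (auto simp: asc_lists_def gaps_asc_SucD)

lemma qpoch_Suc: "qpoch (Suc n) = qpoch n * (1 - fps_X ^ Suc n)"
  by (simp add: qpoch_def prod.nat_ivl_Suc' mult.commute)

lemma is_unit_qpoch: "is_unit (qpoch n)"
proof -
  have "fps_nth (qpoch n) 0 = 1"
    by (induction n) (simp_all add: qpoch_def qpoch_Suc)
  then show ?thesis by simp
qed

lemma qbinom_mult_qpoch:
  assumes "j \<le> m"
  shows "qbinom m j * (qpoch j * qpoch (m - j)) = qpoch m"
  using assms is_unit_qpoch by (simp add: qbinom_def is_unit_mult_iff unit_div_mult_self)

lemma qpoch_nonzero: "qpoch n \<noteq> 0"
  using is_unit_qpoch[of n] by auto

lemma qbinom_0 [simp]: "qbinom m 0 = 1"
  by (simp add: qbinom_def qpoch_def[of 0] qpoch_nonzero)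

lemma qbinom_self [simp]: "qbinom m m = 1"
  by (simp add: qbinom_def qpoch_def[of 0] qpoch_nonzero)

lemma qbinom_eq_0: "m < j \<Longrightarrow> qbinom m j = 0"
  by (simp add: qbinom_def)

lemma qbinom_Suc_Suc:
  "qbinom (Suc m) (Suc j) = qbinom m (Suc j) + fps_X ^ (m - j) * qbinom m j"
proof (cases "j < m")
  case False
  then show ?thesis
    by (cases "j = m") (simp_all add: qbinom_eq_0)
next
  case True
  then obtain k where m: "m = Suc (j + k)"
    using less_iff_Suc_add by blast
  then have k: "m - j = Suc k" "m - Suc j = k"
    by simp_all
  define D where "D = qpoch (Suc j) * qpoch (Suc k)"
  have lhs: "qbinom (Suc m) (Suc j) * D = qpoch m * (1 - fps_X ^ Suc m)"
    using qbinom_mult_qpoch[of "Suc j" "Suc m"] True k by (simp add: D_def qpoch_Suc)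
  have rhs1: "qbinom m (Suc j) * D = qpoch m * (1 - fps_X ^ Suc k)"
    using qbinom_mult_qpoch[of "Suc j" m] True k
    by (simp add: D_def qpoch_Suc[of k] mult_ac)
  have rhs2: "qbinom m j * D = qpoch m * (1 - fps_X ^ Suc j)"
    using qbinom_mult_qpoch[of j m] True k
    by (simp add: D_def qpoch_Suc[of j] mult_ac)
  have "fps_X ^ Suc k * fps_X ^ Suc j = (fps_X ^ Suc m :: rat fps)"
    unfolding m by (simp add: power_add[symmetric] add.commute)
  then have "qbinom (Suc m) (Suc j) * D = (qbinom m (Suc j) + fps_X ^ (m - j) * qbinom m j) * D"
    unfolding lhs distrib_right mult.assoc rhs1 rhs2 k(1) by (simp add: algebra_simps)
  moreover have "D \<noteq> 0"
    by (simp add: D_def qpoch_nonzero)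
  ultimately show ?thesis
    by simp
qed

definition neg_qpoch :: "nat \<Rightarrow> rat fps" where
  "neg_qpoch m = (\<Prod>i=1..m. 1 + fps_X ^ i)"

lemma neg_qpoch_Suc: "neg_qpoch (Suc m) = neg_qpoch m * (1 + fps_X ^ Suc m)"
  by (simp add: neg_qpoch_def prod.nat_ivl_Suc' mult.commute)

lemma Suc_Suc_choose_two: "Suc (Suc j) choose 2 = (Suc j choose 2) + Suc j"
  by (simp add: numeral_2_eq_2)

lemma sum_qbinom_eq_neg_qpoch:
  "(\<Sum>j\<le>m. fps_X ^ ((j+1) choose 2) * qbinom m j) = neg_qpoch m"
proof (induction m)
  case 0
  then show ?case
    by (simp add: neg_qpoch_def numeral_2_eq_2)
next
  case (Suc m)
  define f where "f n j = fps_X ^ (Suc j choose 2) * qbinom n j" for n j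
  have IH: "(\<Sum>j\<le>m. f m j) = neg_qpoch m"
    using Suc.IH by (simp add: f_def)
  have shift: "fps_X ^ (Suc (Suc j) choose 2) * (fps_X ^ (m - j) * qbinom m j) = fps_X ^ Suc m * f m j"
    if "j \<le> m" for j
  proof -
    have "(Suc (Suc j) choose 2) + (m - j) = Suc m + (Suc j choose 2)"
      using that by (simp add: Suc_Suc_choose_two)
    then show ?thesis
      unfolding f_def mult.assoc[symmetric] power_add[symmetric] by simp
  qed
  have head: "1 + (\<Sum>j\<le>m. f m (Suc j)) = (\<Sum>j\<le>Suc m. f m j)"
    unfolding sum.atMost_Suc_shift[of "f m"] by (simp add: f_def numeral_2_eq_2)
  have tail: "(\<Sum>j\<le>m. fps_X ^ (Suc (Suc j) choose 2) * (fps_X ^ (m - j) * qbinom m j))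
      = fps_X ^ Suc m * (\<Sum>j\<le>m. f m j)"
    unfolding sum_distrib_left by (rule sum.cong) (simp_all add: shift)
  have "(\<Sum>j\<le>Suc m. f (Suc m) j) = 1 + (\<Sum>j\<le>m. f (Suc m) (Suc j))"
    unfolding sum.atMost_Suc_shift by (simp add: f_def numeral_2_eq_2)
  also have "\<dots> = (1 + (\<Sum>j\<le>m. f m (Suc j)))
      + (\<Sum>j\<le>m. fps_X ^ (Suc (Suc j) choose 2) * (fps_X ^ (m - j) * qbinom m j))"
    by (simp add: f_def qbinom_Suc_Suc distrib_left sum.distrib)
  also have "\<dots> = (\<Sum>j\<le>Suc m. f m j) + fps_X ^ Suc m * (\<Sum>j\<le>m. f m j)"
    by (simp only: head tail)
  also have "\<dots> = neg_qpoch (Suc m)"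
    using IH by (simp add: f_def qbinom_eq_0 neg_qpoch_Suc algebra_simps)
  finally show ?case
    by (simp add: f_def)
qed

lemma weight_gf_asc_lists_lift:
  "weight_gf (asc_lists m (Suc c)) = fps_X ^ m * weight_gf (asc_lists m c)"
  unfolding asc_lists_lift
  by (rule weight_gf_image) (auto simp: asc_lists_def intro: inj_on_subset[OF inj_mapI])

lemma weight_gf_asc_lists: "weight_gf (asc_lists m c) = fps_X ^ (c * m) * weight_gf (asc_lists m 0)"
  by (induction c) (simp_all add: weight_gf_asc_lists_lift power_add mult.assoc)

lemma weight_gf_asc_lists_Suc:
  "weight_gf (asc_lists (Suc m) c) = weight_gf (asc_lists (Suc m) (Suc c))
     + fps_X ^ Suc c * weight_gf (asc_lists m (Suc c))
     + fps_X ^ (c + 2) * weight_gf (asc_lists m (c + 2))"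
proof -
  let ?first = "Cons (Suc c, True) ` asc_lists m (Suc c)"
  let ?second = "Cons (c + 2, False) ` asc_lists m (c + 2)"
  have finite: "finite {\<rho> \<in> A. op_weight \<rho> = n}" if "A \<subseteq> asc_lists (Suc m) c" for A n
    using that by (intro finite_weight_fibre_length[of _ "Suc m"]) (auto simp: asc_lists_def)
  have "weight_gf (asc_lists (Suc m) c)
      = weight_gf (asc_lists (Suc m) (Suc c)) + weight_gf (?first \<union> ?second)"
    unfolding asc_lists_Suc[of m c]
    by (rule weight_gf_Un; (rule finite)?) (auto simp: asc_lists_def gaps_asc_SucD)
  also have "weight_gf (?first \<union> ?second) = weight_gf ?first + weight_gf ?second"
    by (rule weight_gf_Un) (auto intro!: finite simp: asc_lists_Suc[of m c])
  finally show ?thesis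
    by (simp add: weight_gf_Cons add.assoc)
qed

lemma weight_gf_asc_lists_rec:
  "(1 - fps_X ^ Suc m) * weight_gf (asc_lists (Suc m) 0)
     = (fps_X ^ Suc m + fps_X ^ (2 * Suc m)) * weight_gf (asc_lists m 0)"
proof -
  have "weight_gf (asc_lists (Suc m) 0)
      = fps_X ^ Suc m * weight_gf (asc_lists (Suc m) 0)
        + (fps_X ^ Suc m + fps_X ^ (2 * Suc m)) * weight_gf (asc_lists m 0)"
    using weight_gf_asc_lists_Suc[of m 0]
    by (simp add: weight_gf_asc_lists[of _ "Suc 0"] weight_gf_asc_lists[of _ "Suc (Suc 0)"]
        algebra_simps mult_2 mult_2_right flip: power_add)
  then show ?thesis
    by (simp add: algebra_simps)
qed

lemma weight_gf_asc_lists_mult_qpoch: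
  "weight_gf (asc_lists m 0) * qpoch m = fps_X ^ ((m+1) choose 2) * neg_qpoch m"
proof (induction m)
  case 0
  then show ?case
    by (simp add: asc_lists_0 weight_gf_Nil qpoch_def neg_qpoch_def numeral_2_eq_2)
next
  case (Suc m)
  have "weight_gf (asc_lists (Suc m) 0) * qpoch (Suc m)
      = ((1 - fps_X ^ Suc m) * weight_gf (asc_lists (Suc m) 0)) * qpoch m"
    by (simp add: qpoch_Suc mult_ac)
  also have "\<dots> = (fps_X ^ Suc m + fps_X ^ (2 * Suc m)) * (weight_gf (asc_lists m 0) * qpoch m)"
    by (simp only: weight_gf_asc_lists_rec mult.assoc)
  also have "\<dots> = (fps_X ^ Suc m + fps_X ^ (2 * Suc m)) * fps_X ^ ((m+1) choose 2) * neg_qpoch m"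
    by (simp only: Suc.IH mult.assoc)
  also have "(fps_X ^ Suc m + fps_X ^ (2 * Suc m)) * fps_X ^ ((m+1) choose 2)
      = fps_X ^ ((Suc m + 1) choose 2) * (1 + fps_X ^ Suc m :: rat fps)"
    by (simp add: Suc_Suc_choose_two algebra_simps mult_2 flip: power_add)
  finally show ?case
    by (simp add: neg_qpoch_Suc mult_ac)
qed

lemma weight_gf_asc_lists_eq:
  "weight_gf (asc_lists m 0)
     = fps_X ^ ((m+1) choose 2) / qpoch m * (\<Sum>j\<le>m. fps_X ^ ((j+1) choose 2) * qbinom m j)"
proof -
  have "fps_X ^ ((m+1) choose 2) / qpoch m * (\<Sum>j\<le>m. fps_X ^ ((j+1) choose 2) * qbinom m j)
      = fps_X ^ ((m+1) choose 2) * neg_qpoch m / qpoch m"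
    unfolding sum_qbinom_eq_neg_qpoch
    using unit_div_mult_swap[OF is_unit_qpoch] by (simp add: mult.commute)
  also have "\<dots> = weight_gf (asc_lists m 0)"
    using weight_gf_asc_lists_mult_qpoch[of m] by (simp add: unit_eq_div1[OF is_unit_qpoch])
  finally show ?thesis ..
qed

theorem mainTheorem19:
  shows "(\<lambda>m. fps_X ^ ((m+1) choose 2) / qpoch m *
              (\<Sum>j\<le>m. fps_X ^ ((j+1) choose 2) * qbinom m j))
         sums (Abs_fps (\<lambda>n. of_nat (card {\<pi>\<in>C1. op_weight \<pi> = n})) :: rat fps)"
proof -
  have "(\<lambda>m. weight_gf {\<pi> \<in> C1. length \<pi> = m}) sums weight_gf C1"
    by (rule sums_weight_gf_by_length) (auto simp: C1_def is_overpartition_def)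
  moreover have "weight_gf {\<pi> \<in> C1. length \<pi> = m}
      = fps_X ^ ((m+1) choose 2) / qpoch m * (\<Sum>j\<le>m. fps_X ^ ((j+1) choose 2) * qbinom m j)" for m
    by (simp add: C1_length_eq weight_gf_rev weight_gf_asc_lists_eq)
  ultimately show ?thesis
    by (simp add: weight_gf_def)
qed

end
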